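(* Let $X$ be a finite $T_0$-space and $G=\{g_1,\dots,g_m\}$ a finite group with $g_1$ the identity, and suppose $G$ acts freely on $X$ by homeomorphisms. Then (for a suitable labelling of $X$) $X_M$ is a block matrix $(A_{i,j})_{i,j=1,\dots,m}$ with each block $A_{i,j}$ of size $\frac{|X|}{m}\times\frac{|X|}{m}$, such that $A_{i,j}=A_{1,s}$ where $g_s=g_jg_i^{-1}$, for all $i,j=1,\dots,m$.
   Context: A finite $T_0$-space is identified with a finite poset via $x\le y$ iff $U_x\subseteq U_y$, where $U_x$ is the minimal open set containing $x$; homeomorphisms are order automorphisms. For a labelling $X=\{x_1,\dots,x_n\}$, $X_M=(x_{i,j})$ is the $n\times n$ matrix with $x_{i,j}=0$ if $x_i\le x_j$ and $x_{i,j}=1$ otherwise; a different labelling changes $X_M$ to $EX_ME^{-1}$ for a permutation matrix $E$. *)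

theory Defs
  imports "HOL-Algebra.Group_Action"
begin

text \<open>A finite T0-space is identified with a finite poset (X, r), where
  (x,y) in r means U_x is contained in U_y.  Homeomorphisms are order automorphisms.\<close>

definition finite_poset :: "'a set \<Rightarrow> 'a rel \<Rightarrow> bool" where
  "finite_poset X r \<longleftrightarrow> finite X \<and> partial_order_on X r"

definition poset_matrix :: "'a rel \<Rightarrow> (nat \<Rightarrow> 'a) \<Rightarrow> nat \<Rightarrow> nat \<Rightarrow> nat" where
  "poset_matrix r x i j = (if (x i, x j) \<in> r then 0 else 1)"

definition acts_by_homeomorphisms :: "('g, 'm) monoid_scheme \<Rightarrow> 'a set \<Rightarrow> 'a rel \<Rightarrow> ('g \<Rightarrow> 'a \<Rightarrow> 'a) \<Rightarrow> bool" where
  "acts_by_homeomorphisms G X r \<phi> \<longleftrightarrow> group_action G X \<phi> \<and>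
     (\<forall>g \<in> carrier G. \<forall>x \<in> X. \<forall>y \<in> X. (x, y) \<in> r \<longleftrightarrow> (\<phi> g x, \<phi> g y) \<in> r)"

definition acts_freely :: "('g, 'm) monoid_scheme \<Rightarrow> 'a set \<Rightarrow> ('g \<Rightarrow> 'a \<Rightarrow> 'a) \<Rightarrow> bool" where
  "acts_freely G X \<phi> \<longleftrightarrow> (\<forall>g \<in> carrier G. \<forall>x \<in> X. \<phi> g x = x \<longrightarrow> g = \<one>\<^bsub>G\<^esub>)"

end

theory Submission
  imports Defs
begin

(* For a free action, (h, y) \<mapsto> h y is a bijection G \<times> R \<rightarrow> X for any set R of orbit
   representatives, so |X| = m k with k = |R|. List block i as g_i^-1 y_1, ..., g_i^-1 y_k.
   Since G acts by order automorphisms, g_i^-1 y_a \<le> g_j^-1 y_b iff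
   y_a \<le> g_i g_j^-1 y_b = g_s^-1 y_b, which is the comparison of the entries (1, a) and (s, b). *)

lemma (in group_action) orbit_subset: "x \<in> E \<Longrightarrow> orbit G \<phi> x \<subseteq> E"
  unfolding orbit_def using element_image by blast

lemma (in group_action) orbit_eq:
  assumes "x \<in> E" "y \<in> orbit G \<phi> x"
  shows "orbit G \<phi> y = orbit G \<phi> x"
proof -
  have "y \<in> E"
    using assms orbit_subset by blast
  moreover have "x \<in> orbit G \<phi> y"
    using orbit_sym assms \<open>y \<in> E\<close> by blast
  ultimately show ?thesis
    using orbit_trans assms orbit_subset by blast
qed

lemma (in group_action) inj_on_orbit_map_if_free:
  assumes "acts_freely G E \<phi>" "x \<in> E"
  shows "inj_on (\<lambda>h. \<phi> h x) (carrier G)"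
proof (rule inj_onI)
  interpret group G
    using group_hom group_hom.axioms(1) by blast
  fix h h' assume h: "h \<in> carrier G" "h' \<in> carrier G" and eq: "\<phi> h x = \<phi> h' x"
  have "\<phi> (inv h' \<otimes> h) x = x"
    using composition_rule[OF assms(2)] orbit_sym_aux[OF h(2) assms(2)] eq h by simp
  then have "inv h' \<otimes> h = \<one>"
    using assms h unfolding acts_freely_def by blast
  then show "h = h'"
    using h by (metis inv_closed inv_equality inv_inv)
qed

lemma (in group_action) free_action_transversal:
  assumes "acts_freely G E \<phi>"
  shows "\<exists>R \<subseteq> E. bij_betw (\<lambda>(h, y). \<phi> h y) (carrier G \<times> R) E"
proof -
  interpret group G
    using group_hom group_hom.axioms(1) by blast
  define rep where "rep Orb = (SOME y. y \<in> Orb)" for Orb :: "'c set"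
  define R where "R = rep ` orbits G E \<phi>"
  have rep_in_orbit: "rep (orbit G \<phi> x) \<in> orbit G \<phi> x" if "x \<in> E" for x
    unfolding rep_def using orbit_refl[OF that] by (rule someI)
  have R_subset: "R \<subseteq> E"
    unfolding R_def orbits_def using rep_in_orbit orbit_subset by blast
  have rep_R: "rep (orbit G \<phi> y) = y" if y: "y \<in> R" for y
  proof -
    obtain w where w: "w \<in> E" "y = rep (orbit G \<phi> w)"
      using y unfolding R_def orbits_def by blast
    then have "y \<in> orbit G \<phi> w"
      using rep_in_orbit by simp
    then have "orbit G \<phi> y = orbit G \<phi> w"
      by (rule orbit_eq[OF w(1)])
    then show ?thesis
      using w(2) by simp
  qed
  have "inj_on (\<lambda>(h, y). \<phi> h y) (carrier G \<times> R)"
  proof (rule inj_onI, clarsimp)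
    fix h y h' y'
    assume h: "h \<in> carrier G" "h' \<in> carrier G" and y: "y \<in> R" "y' \<in> R"
      and eq: "\<phi> h y = \<phi> h' y'"
    have "y' \<in> E" "y \<in> E"
      using y R_subset by auto
    then have "y' = \<phi> (inv h' \<otimes> h) y"
      using orbit_sym_aux[OF h(2) \<open>y' \<in> E\<close> eq[symmetric]] composition_rule h by simp
    then have "y' \<in> orbit G \<phi> y"
      unfolding orbit_def using h by blast
    then have "orbit G \<phi> y' = orbit G \<phi> y"
      by (rule orbit_eq[OF \<open>y \<in> E\<close>])
    then have "y' = y"
      using rep_R y by metis
    then have "(\<lambda>h. \<phi> h y) h = (\<lambda>h. \<phi> h y) h'"
      using eq by simp
    then have "h = h'"
      using inj_onD[OF inj_on_orbit_map_if_free[OF assms \<open>y \<in> E\<close>]] h by blast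
    then show "h = h' \<and> y = y'"
      using \<open>y' = y\<close> by simp
  qed
  moreover have "(\<lambda>(h, y). \<phi> h y) ` (carrier G \<times> R) = E"
  proof
    show "(\<lambda>(h, y). \<phi> h y) ` (carrier G \<times> R) \<subseteq> E"
    proof clarify
      fix h y assume "h \<in> carrier G" "y \<in> R"
      then show "\<phi> h y \<in> E"
        using element_image[OF _ _ refl] R_subset by blast
    qed
    show "E \<subseteq> (\<lambda>(h, y). \<phi> h y) ` (carrier G \<times> R)"
    proof
      fix x assume x: "x \<in> E"
      define y where "y = rep (orbit G \<phi> x)"
      have "y \<in> orbit G \<phi> x"
        unfolding y_def by (rule rep_in_orbit[OF x])
      then obtain h where h: "h \<in> carrier G" "\<phi> h x = y"
        unfolding orbit_def by blast
      have "y \<in> R"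
        unfolding R_def orbits_def y_def using x by blast
      moreover have "x = \<phi> (inv h) y"
        using orbit_sym_aux[OF h(1) x h(2)] by simp
      ultimately show "x \<in> (\<lambda>(h, y). \<phi> h y) ` (carrier G \<times> R)"
        using h(1) by (intro rev_image_eqI[of "(inv h, y)"]) auto
    qed
  qed
  ultimately show ?thesis
    using R_subset unfolding bij_betw_def by blast
qed

lemma block_index_div_mod:
  fixes k :: nat
  assumes "a \<in> {1..k}"
  shows "((i - 1) * k + a - 1) div k = i - 1" and "((i - 1) * k + a - 1) mod k = a - 1"
proof -
  have "(i - 1) * k + a - 1 = (a - 1) + k * (i - 1)" "a - 1 < k"
    using assms by (auto simp: mult.commute)
  then show "((i - 1) * k + a - 1) div k = i - 1" "((i - 1) * k + a - 1) mod k = a - 1"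
    by simp_all
qed

lemma block_index_bij:
  "bij_betw (\<lambda>(i, a). (i - 1) * k + a) ({1..m} \<times> {1..k}) {1..m * (k::nat)}"
proof (rule bij_betw_byWitness[where f' = "\<lambda>n. ((n - 1) div k + 1, (n - 1) mod k + 1)"],
    goal_cases)
  case 1
  show ?case
    using block_index_div_mod by (auto simp del: One_nat_def)
next
  case 2
  show ?case
    by (simp add: add.commute)
next
  case 3
  have "(i - 1) * k + a \<in> {1..m * k}" if "i \<in> {1..m}" "a \<in> {1..k}" for i a
  proof -
    have "(i - 1) * k + a \<le> (m - 1) * k + k"
      using that by (intro add_mono mult_right_mono) auto
    then show ?thesis
      using that by (cases m) auto
  qed
  then show ?case
    by auto
next
  case 4
  have "(n - 1) div k + 1 \<in> {1..m} \<and> (n - 1) mod k + 1 \<in> {1..k}" if "n \<in> {1..m * k}" for n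
  proof -
    have "k > 0"
      using that by (cases k) auto
    moreover have "(n - 1) div k < m"
      using that by (auto intro: less_mult_imp_div_less)
    ultimately show ?thesis
      by (auto simp: Suc_le_eq)
  qed
  then show ?case
    by auto
qed

lemma (in group) inv_bij: "bij_betw (\<lambda>h. inv h) (carrier G) (carrier G)"
  by (rule bij_betw_byWitness[where f' = "\<lambda>h. inv h"]) auto

lemma (in group_action) free_action_block_labelling:
  assumes "acts_freely G E \<phi>" "bij_betw g {1..m} (carrier G)" "finite E"
  shows "\<exists>k x y. card E = m * k \<and> bij_betw x {1..card E} E \<and> y ` {1..k} \<subseteq> E \<and>
    (\<forall>i \<in> {1..m}. \<forall>a \<in> {1..k}. x ((i - 1) * k + a) = \<phi> (inv (g i)) (y a))"
proof -
  interpret group G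
    using group_hom group_hom.axioms(1) by blast
  obtain R where "R \<subseteq> E" and act: "bij_betw (\<lambda>(h, y). \<phi> h y) (carrier G \<times> R) E"
    using free_action_transversal[OF assms(1)] by blast
  define k where "k = card R"
  obtain y where y: "bij_betw y {1..k} R"
    using ex_bij_betw_nat_finite_1 finite_subset[OF \<open>R \<subseteq> E\<close> assms(3)] unfolding k_def by blast
  define block where "block = (\<lambda>(i, a). (i - 1) * k + a)"
  define x where "x = (\<lambda>(h, y). \<phi> h y) \<circ> map_prod (\<lambda>i. inv (g i)) y \<circ>
    the_inv_into ({1..m} \<times> {1..k}) block"
  have block: "bij_betw block ({1..m} \<times> {1..k}) {1..m * k}"
    unfolding block_def by (rule block_index_bij)
  have "bij_betw (\<lambda>i. inv (g i)) {1..m} (carrier G)"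
    using bij_betw_trans[OF assms(2) inv_bij] by (simp add: comp_def)
  then have "bij_betw (map_prod (\<lambda>i. inv (g i)) y) ({1..m} \<times> {1..k}) (carrier G \<times> R)"
    using y by (rule bij_betw_map_prod)
  then have "bij_betw ((\<lambda>(h, y). \<phi> h y) \<circ> map_prod (\<lambda>i. inv (g i)) y) ({1..m} \<times> {1..k}) E"
    using act by (rule bij_betw_trans)
  then have x: "bij_betw x {1..m * k} E"
    unfolding x_def by (rule bij_betw_trans[OF bij_betw_the_inv_into[OF block]])
  have "card E = m * k"
    using bij_betw_same_card[OF x] by simp
  moreover have "x ((i - 1) * k + a) = \<phi> (inv (g i)) (y a)" if "i \<in> {1..m}" "a \<in> {1..k}" for i a
    using the_inv_into_f_f[OF bij_betw_imp_inj_on[OF block], of "(i, a)"] that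
    unfolding x_def block_def by simp
  moreover have "y ` {1..k} \<subseteq> E"
    using bij_betw_imp_surj_on[OF y] \<open>R \<subseteq> E\<close> by simp
  ultimately show ?thesis
    using x by metis
qed

lemma (in group_action) homeomorphic_action_mem_iff:
  assumes "acts_by_homeomorphisms G E r \<phi>"
    and "h \<in> carrier G" "h' \<in> carrier G" "u \<in> E" "v \<in> E"
  shows "(\<phi> h u, \<phi> h' v) \<in> r \<longleftrightarrow> (u, \<phi> (inv h \<otimes> h') v) \<in> r"
proof -
  interpret group G
    using group_hom group_hom.axioms(1) by blast
  have "\<phi> h u \<in> E" "\<phi> h' v \<in> E"
    using assms element_image by blast+
  then have "(\<phi> h u, \<phi> h' v) \<in> r \<longleftrightarrow> (\<phi> (inv h) (\<phi> h u), \<phi> (inv h) (\<phi> h' v)) \<in> r"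
    using assms(1,2) unfolding acts_by_homeomorphisms_def by blast
  also have "\<dots> \<longleftrightarrow> (u, \<phi> (inv h \<otimes> h') v) \<in> r"
    using orbit_sym_aux[OF assms(2,4)] composition_rule[OF assms(5)] assms(2,3) by simp
  finally show ?thesis .
qed

theorem mainTheorem17:
  fixes X :: "'a set" and r :: "'a rel"
    and G :: "('g, 'm) monoid_scheme" and \<phi> :: "'g \<Rightarrow> 'a \<Rightarrow> 'a"
    and g :: "nat \<Rightarrow> 'g" and m :: nat
  assumes "finite_poset X r"
    and "group G" and "finite (carrier G)"
    and "m = card (carrier G)"
    and "bij_betw g {1..m} (carrier G)" and "g 1 = \<one>\<^bsub>G\<^esub>"
    and "acts_by_homeomorphisms G X r \<phi>"
    and "acts_freely G X \<phi>"
  shows "\<exists>x :: nat \<Rightarrow> 'a. bij_betw x {1..card X} X \<and>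
           card X = m * (card X div m) \<and>
           (let k = card X div m in
            \<forall>i \<in> {1..m}. \<forall>j \<in> {1..m}. \<forall>s \<in> {1..m}.
              g s = g j \<otimes>\<^bsub>G\<^esub> inv\<^bsub>G\<^esub> (g i) \<longrightarrow>
              (\<forall>a \<in> {1..k}. \<forall>b \<in> {1..k}.
                 poset_matrix r x ((i - 1) * k + a) ((j - 1) * k + b)
                 = poset_matrix r x a ((s - 1) * k + b)))"
proof -
  interpret group_action G X \<phi>
    using assms(7) unfolding acts_by_homeomorphisms_def by blast
  interpret group G by fact
  obtain k x y where card: "card X = m * k" and x: "bij_betw x {1..card X} X"
    and y: "y ` {1..k} \<subseteq> X"
    and block: "\<And>i a. i \<in> {1..m} \<Longrightarrow> a \<in> {1..k} \<Longrightarrow> x ((i - 1) * k + a) = \<phi> (inv\<^bsub>G\<^esub> (g i)) (y a)"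
    using free_action_block_labelling assms(1,5,8) unfolding finite_poset_def by metis
  have "m > 0"
    using assms(3,4) one_closed by (auto simp: card_gt_0_iff)
  then have k: "card X div m = k"
    using card by simp
  have g: "g i \<in> carrier G" if "i \<in> {1..m}" for i
    using assms(5) that bij_betwE by blast
  have "poset_matrix r x ((i - 1) * k + a) ((j - 1) * k + b) = poset_matrix r x a ((s - 1) * k + b)"
    if "i \<in> {1..m}" "j \<in> {1..m}" "s \<in> {1..m}" "g s = g j \<otimes>\<^bsub>G\<^esub> inv\<^bsub>G\<^esub> (g i)" "a \<in> {1..k}" "b \<in> {1..k}"
    for i j s a b
  proof -
    have gi: "g i \<in> carrier G" and gj: "g j \<in> carrier G" and y_mem: "y a \<in> X" "y b \<in> X"
      using that g y by auto
    have "\<phi> \<one>\<^bsub>G\<^esub> (y a) = y a"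
      using y_mem by (metis id_eq_one restrict_apply')
    then have "x a = y a"
      using block[of 1 a] \<open>m > 0\<close> that assms(6) by simp
    moreover have "inv\<^bsub>G\<^esub> (inv\<^bsub>G\<^esub> (g i)) \<otimes>\<^bsub>G\<^esub> inv\<^bsub>G\<^esub> (g j) = inv\<^bsub>G\<^esub> (g s)"
      using that gi gj by (simp add: inv_mult_group)
    ultimately show ?thesis
      using homeomorphic_action_mem_iff[OF assms(7) inv_closed[OF gi] inv_closed[OF gj] y_mem]
        block that unfolding poset_matrix_def by simp
  qed
  then show ?thesis
    using x card unfolding k Let_def by blast
qed

end
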